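(* There exists a polynomial-time computable total functional $F\colon\mathcal B\to\mathcal B$ that is not computed by any oracle Turing machine with finite length-revision. In particular, $F$ is not strongly polynomial-time computable, so the class of strongly polynomial-time computable functionals is a proper subclass of the class of polynomial-time computable functionals.
   Context: $\Sigma=\{0,1\}$, $\mathcal B=(\Sigma^* )^{\Sigma^*}$ is the set of total string functions. An oracle Turing machine $M^?$ with oracle $\varphi$ replaces, upon entering its query state, the query-tape content $\mathbf b$ by $\varphi(\mathbf b)$ in one time step; $\operatorname{time}_{M^\varphi}(\mathbf a)\in\mathbb N\cup\{\infty\}$ is its number of steps on input $\mathbf a$. $M^?$ computes $F$ if $M^\varphi=F(\varphi)$ for all $\varphi\in\mathcal B$. Size function: $|\varphi|(n)=\max\{|\varphi(\mathbf a)|:|\mathbf a|\le n\}$. Second-order polynomials: smallest class of functions $\mathbb N^{\mathbb N}\times\mathbb N\to\mathbb N$ containing $(l,n)\mapsto p(n)$ for polynomials $p$ with natural coefficients, closed under pointwise sum, product and $P\mapsto P^+$, $P^+(l,n)=l(P(l,n))$. $F$ is polynomial-time computable if computed by a machine with $\operatorname{time}_{M^\varphi}(\mathbf a)\le P(|\varphi|,|\mathbf a|)$ for all $\varphi,\mathbf a$ for some second-order polynomial $P$. Length revision function: with $\mathbf b_k$ the content of the oracle answer tape at step $k$, $o_{\varphi,\mathbf a}(0)=|\mathbf a|$, $o_{\varphi,\mathbf a}(n+1)=\max\{o_{\varphi,\mathbf a}(n),|\mathbf b_{n+1}|\}$. $t\colon\mathbb N\to\mathbb N$ is a step-count for $M^?$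 if for all $\varphi,\mathbf a$ and all $n\le\operatorname{time}_{M^\varphi}(\mathbf a)$: $n\le t(o_{\varphi,\mathbf a}(n))$. $M^?$ has finite length-revision if there is $N$ with $\#o_{\varphi,\mathbf a}(\mathbb N)\le N$ for all $\varphi,\mathbf a$. $F$ is strongly polynomial-time computable if computed by a machine having finite length-revision and a polynomial step-count. *)

theory Defs
  imports "HOL-Computational_Algebra.Polynomial" "HOL-Library.Extended_Nat"
begin

type_synonym bstr = "bool list"
type_synonym bfun = "bstr \<Rightarrow> bstr"

definition size_fn :: "bfun \<Rightarrow> nat \<Rightarrow> nat" where
  "size_fn \<phi> n = Max ((\<lambda>a. length (\<phi> a)) ` {a :: bstr. length a \<le> n})"

inductive_set second_order_poly :: "((nat \<Rightarrow> nat) \<Rightarrow> nat \<Rightarrow> nat) set" where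
  sop_poly: "(\<lambda>l n. poly (p :: nat poly) n) \<in> second_order_poly"
| sop_add: "P \<in> second_order_poly \<Longrightarrow> Q \<in> second_order_poly \<Longrightarrow>
              (\<lambda>l n. P l n + Q l n) \<in> second_order_poly"
| sop_mult: "P \<in> second_order_poly \<Longrightarrow> Q \<in> second_order_poly \<Longrightarrow>
              (\<lambda>l n. P l n * Q l n) \<in> second_order_poly"
| sop_app: "P \<in> second_order_poly \<Longrightarrow> (\<lambda>l n. l (P l n)) \<in> second_order_poly"

text \<open>Tape symbols are natural numbers below nsyms; 0 is the blank, 1 encodes the bit 0
  (False) and 2 encodes the bit 1 (True). A tape is a finite list of written cells (all cells
  beyond it are blank) together with the head position; tapes are one-way infinite to the right.
  Tape 0 is the input tape, tape 1 the oracle (query) tape, tape 2 the output tape; further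
  tapes are work tapes.\<close>

type_synonym tape = "nat list \<times> nat"
type_synonym config = "nat \<times> tape list"

record otm =
  ntapes :: nat
  nstates :: nat
  nsyms :: nat
  delta :: "nat \<Rightarrow> nat list \<Rightarrow> nat \<times> nat list \<times> int list"
  q_start :: nat
  q_halt :: nat
  q_query :: nat
  q_answer :: nat

definition enc :: "bool \<Rightarrow> nat" where
  "enc b = (if b then 2 else 1)"

definition tape_read :: "tape \<Rightarrow> nat" where
  "tape_read t = (if snd t < length (fst t) then fst t ! snd t else 0)"

definition tape_write :: "nat \<Rightarrow> tape \<Rightarrow> tape" where
  "tape_write s t = (if snd t < length (fst t) then ((fst t)[snd t := s], snd t)
                     else (fst t @ replicate (snd t - length (fst t)) 0 @ [s], snd t))"

definition tape_move :: "int \<Rightarrow> tape \<Rightarrow> tape" where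
  "tape_move d t = (fst t, nat (int (snd t) + d))"

definition tape_content :: "tape \<Rightarrow> bstr" where
  "tape_content t = map (\<lambda>s. s = 2) (takeWhile (\<lambda>s. s = 1 \<or> s = 2) (fst t))"

definition wf_otm :: "otm \<Rightarrow> bool" where
  "wf_otm M \<longleftrightarrow> ntapes M \<ge> 3 \<and> nsyms M \<ge> 3 \<and>
     q_start M < nstates M \<and> q_halt M < nstates M \<and> q_query M < nstates M \<and>
     q_answer M < nstates M \<and> q_halt M \<noteq> q_query M \<and>
     (\<forall>q < nstates M. \<forall>rs. length rs = ntapes M \<and> set rs \<subseteq> {..<nsyms M} \<longrightarrow>
        (case delta M q rs of (q', ws, ds) \<Rightarrow>
           q' < nstates M \<and> length ws = ntapes M \<and> set ws \<subseteq> {..<nsyms M} \<and>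
           length ds = ntapes M \<and> set ds \<subseteq> {-1, 0, 1}))"

definition init_config :: "otm \<Rightarrow> bstr \<Rightarrow> config" where
  "init_config M a = (q_start M, (map enc a, 0) # replicate (ntapes M - 1) ([], 0))"

definition otm_step :: "otm \<Rightarrow> bfun \<Rightarrow> config \<Rightarrow> config" where
  "otm_step M \<phi> c = (let q = fst c; ts = snd c in
     if q = q_halt M then c
     else if q = q_query M then
       (q_answer M, ts[1 := (map enc (\<phi> (tape_content (ts ! 1))), 0)])
     else (case delta M q (map tape_read ts) of (q', ws, ds) \<Rightarrow>
       (q', map (\<lambda>((t, w), d). tape_move d (tape_write w t)) (zip (zip ts ws) ds))))"

definition otm_run :: "otm \<Rightarrow> bfun \<Rightarrow> bstr \<Rightarrow> nat \<Rightarrow> config" where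
  "otm_run M \<phi> a n = (otm_step M \<phi> ^^ n) (init_config M a)"

definition halted :: "otm \<Rightarrow> config \<Rightarrow> bool" where
  "halted M c \<longleftrightarrow> fst c = q_halt M"

definition otm_time :: "otm \<Rightarrow> bfun \<Rightarrow> bstr \<Rightarrow> enat" where
  "otm_time M \<phi> a = (if \<exists>n. halted M (otm_run M \<phi> a n)
                      then enat (LEAST n. halted M (otm_run M \<phi> a n)) else \<infinity>)"

definition computes :: "otm \<Rightarrow> (bfun \<Rightarrow> bstr \<Rightarrow> bstr) \<Rightarrow> bool" where
  "computes M F \<longleftrightarrow> wf_otm M \<and>
     (\<forall>\<phi> a. \<exists>n. halted M (otm_run M \<phi> a n) \<and>
                  tape_content (snd (otm_run M \<phi> a n) ! 2) = F \<phi> a)"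

definition poly_time_computable :: "(bfun \<Rightarrow> bstr \<Rightarrow> bstr) \<Rightarrow> bool" where
  "poly_time_computable F \<longleftrightarrow> (\<exists>M P. computes M F \<and> P \<in> second_order_poly \<and>
     (\<forall>\<phi> a. otm_time M \<phi> a \<le> enat (P (size_fn \<phi>) (length a))))"

fun length_rev :: "otm \<Rightarrow> bfun \<Rightarrow> bstr \<Rightarrow> nat \<Rightarrow> nat" where
  "length_rev M \<phi> a 0 = length a"
| "length_rev M \<phi> a (Suc n) =
     max (length_rev M \<phi> a n) (length (tape_content (snd (otm_run M \<phi> a (Suc n)) ! 1)))"

definition is_step_count :: "otm \<Rightarrow> (nat \<Rightarrow> nat) \<Rightarrow> bool" where
  "is_step_count M t \<longleftrightarrow> (\<forall>\<phi> a n. enat n \<le> otm_time M \<phi> a \<longrightarrow> n \<le> t (length_rev M \<phi> a n))"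

definition finite_length_revision :: "otm \<Rightarrow> bool" where
  "finite_length_revision M \<longleftrightarrow> (\<exists>N. \<forall>\<phi> a.
     finite (range (length_rev M \<phi> a)) \<and> card (range (length_rev M \<phi> a)) \<le> N)"

definition strongly_poly_time_computable :: "(bfun \<Rightarrow> bstr \<Rightarrow> bstr) \<Rightarrow> bool" where
  "strongly_poly_time_computable F \<longleftrightarrow> (\<exists>M p. computes M F \<and> finite_length_revision M \<and>
     is_step_count M (\<lambda>n. poly (p :: nat poly) n))"

end

theory Submission
  imports Defs
begin

text \<open>The functional sends \<phi> and a to the first bit of \<phi>^|a|([]); a machine computes it in linear
  time by feeding every oracle answer back as the next query.

  Against a machine with at most N length revisions, run on an input of length N + 1, an adversary
  uses oracles mapping [] = 1^L(0) \<mapsto> 1^L(1) \<mapsto> \<dots> \<mapsto> 1^L(i) and fixing every other string. The machine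
  must query the last link 1^L(i), for otherwise redirecting it to 0 changes the output unnoticed.
  Choosing L(i+1) longer than everything seen before that query makes the runs under all later
  oracles agree up to it, so under the oracle for i = N + 1 each answer 1^L(i+1) is a new length
  revision: N + 1 of them.

  Conversely, a polynomial step-count bounds the growth of the query lengths from one revision to
  the next, so N revisions bound the running time by an N-fold iterate of a second-order
  polynomial.\<close>

section \<open>Runs of oracle machines\<close>

lemma otm_run_0 [simp]: "otm_run M \<phi> a 0 = init_config M a"
  by (simp add: otm_run_def)

lemma otm_run_Suc: "otm_run M \<phi> a (Suc n) = otm_step M \<phi> (otm_run M \<phi> a n)"
  by (simp add: otm_run_def)

lemma otm_step_halted: "halted M c \<Longrightarrow> otm_step M \<phi> c = c"
  by (simp add: otm_step_def halted_def Let_def)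

lemma otm_run_halted_stable:
  assumes "halted M (otm_run M \<phi> a n)" and "n \<le> m"
  shows "otm_run M \<phi> a m = otm_run M \<phi> a n"
  using assms(2)
proof (induction m rule: dec_induct)
  case (step m)
  then show ?case using assms(1) by (simp add: otm_run_Suc otm_step_halted)
qed simp

lemma tape_content_map_enc [simp]: "tape_content (map enc b, k) = b"
  by (induction b) (auto simp: tape_content_def enc_def)

lemma tape_content_length_le: "length (tape_content t) \<le> length (fst t)"
  by (simp add: tape_content_def length_takeWhile_le)

definition wf_config :: "otm \<Rightarrow> config \<Rightarrow> bool" where
  "wf_config M c \<longleftrightarrow> fst c < nstates M \<and> length (snd c) = ntapes M \<and>
     (\<forall>t\<in>set (snd c). set (fst t) \<subseteq> {..<nsyms M})"

lemma wf_config_init: "wf_otm M \<Longrightarrow> wf_config M (init_config M a)"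
  by (auto simp: wf_config_def wf_otm_def init_config_def enc_def)

lemma otm_step_query:
  assumes "wf_otm M" and "fst c = q_query M"
  shows "otm_step M \<phi> c = (q_answer M, (snd c)[1 := (map enc (\<phi> (tape_content (snd c ! 1))), 0)])"
  using assms by (auto simp: otm_step_def Let_def wf_otm_def)

lemma otm_step_normal:
  assumes wf: "wf_otm M" and c: "wf_config M c"
    and "fst c \<noteq> q_halt M" and "fst c \<noteq> q_query M"
  obtains q' ws ds where "q' < nstates M" "length ws = ntapes M" "set ws \<subseteq> {..<nsyms M}"
    "length ds = ntapes M" "set ds \<subseteq> {-1, 0, 1}"
    "otm_step M \<phi> c = (q', map (\<lambda>((t, w), d). tape_move d (tape_write w t)) (zip (zip (snd c) ws) ds))"
proof -
  have "tape_read t < nsyms M" if "t \<in> set (snd c)" for t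
    using c that wf unfolding wf_config_def wf_otm_def tape_read_def by (auto simp: subset_iff)
  then have reads: "length (map tape_read (snd c)) = ntapes M" "set (map tape_read (snd c)) \<subseteq> {..<nsyms M}"
    using c by (auto simp: wf_config_def)
  obtain q' ws ds where d: "delta M (fst c) (map tape_read (snd c)) = (q', ws, ds)"
    by (metis prod.collapse)
  have "fst c < nstates M" using c by (simp add: wf_config_def)
  with wf reads d have "q' < nstates M \<and> length ws = ntapes M \<and> set ws \<subseteq> {..<nsyms M} \<and>
      length ds = ntapes M \<and> set ds \<subseteq> {-1, 0, 1}"
    unfolding wf_otm_def by fastforce
  moreover have "otm_step M \<phi> c = (q', map (\<lambda>((t, w), d). tape_move d (tape_write w t)) (zip (zip (snd c) ws) ds))"
    using assms(3,4) d by (simp add: otm_step_def Let_def)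
  ultimately show thesis using that by blast
qed

lemma set_tape_write: "set (fst (tape_write s t)) \<subseteq> insert 0 (insert s (set (fst t)))"
  using set_update_subset_insert[of "fst t" "snd t" s] by (auto simp: tape_write_def)

lemma wf_config_otm_step:
  assumes wf: "wf_otm M" and c: "wf_config M c"
  shows "wf_config M (otm_step M \<phi> c)"
proof -
  consider "fst c = q_halt M" | "fst c = q_query M" | "fst c \<noteq> q_halt M" "fst c \<noteq> q_query M"
    by blast
  then show ?thesis
  proof cases
    case 1
    then show ?thesis using c by (simp add: otm_step_halted halted_def)
  next
    case 2
    have "set (map enc b) \<subseteq> {..<nsyms M}" for b
      using wf by (auto simp: wf_otm_def enc_def)
    then have "\<forall>t\<in>set ((snd c)[1 := (map enc b, 0)]). set (fst t) \<subseteq> {..<nsyms M}" for b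
      using c set_update_subset_insert unfolding wf_config_def by fastforce
    then show ?thesis
      using c wf 2 by (simp add: otm_step_query wf_config_def wf_otm_def)
  next
    case 3
    obtain q' ws ds where h: "q' < nstates M" "length ws = ntapes M" "set ws \<subseteq> {..<nsyms M}"
        "length ds = ntapes M"
      and step: "otm_step M \<phi> c = (q', map (\<lambda>((t, w), d). tape_move d (tape_write w t)) (zip (zip (snd c) ws) ds))"
      using otm_step_normal[OF wf c 3] by metis
    have "0 < nsyms M" using wf by (simp add: wf_otm_def)
    then have "set (fst (tape_move d (tape_write w t))) \<subseteq> {..<nsyms M}"
      if "((t, w), d) \<in> set (zip (zip (snd c) ws) ds)" for t w d
      using that set_tape_write[of w t] c h
      by (fastforce simp: wf_config_def tape_move_def dest: set_zip_leftD set_zip_rightD)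
    then show ?thesis
      using h c unfolding step wf_config_def by (auto split: prod.splits) blast
  qed
qed

lemma wf_config_otm_run: "wf_otm M \<Longrightarrow> wf_config M (otm_run M \<phi> a n)"
  by (induction n) (simp_all add: otm_run_Suc wf_config_init wf_config_otm_step)

lemma query_tape_after_query:
  assumes wf: "wf_otm M" and q: "fst (otm_run M \<phi> a n) = q_query M"
  shows "snd (otm_run M \<phi> a (Suc n)) ! 1 = (map enc (\<phi> (tape_content (snd (otm_run M \<phi> a n) ! 1))), 0)"
proof -
  have "1 < length (snd (otm_run M \<phi> a n))"
    using wf_config_otm_run[OF wf] wf by (simp add: wf_config_def wf_otm_def)
  then show ?thesis using otm_step_query[OF wf q] by (simp add: otm_run_Suc)
qed

lemma otm_run_oracle_cong:
  assumes "\<And>s. s < n \<Longrightarrow> fst (otm_run M \<phi> a s) = q_query M \<Longrightarrow>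
     \<phi> (tape_content (snd (otm_run M \<phi> a s) ! 1)) = \<psi> (tape_content (snd (otm_run M \<phi> a s) ! 1))"
    and "s \<le> n"
  shows "otm_run M \<psi> a s = otm_run M \<phi> a s"
  using assms(2)
proof (induction s)
  case (Suc s)
  then have "otm_run M \<psi> a s = otm_run M \<phi> a s" by simp
  moreover have "otm_step M \<psi> (otm_run M \<phi> a s) = otm_step M \<phi> (otm_run M \<phi> a s)"
    using assms(1)[of s] Suc.prems by (simp add: otm_step_def Let_def)
  ultimately show ?case by (simp add: otm_run_Suc)
qed simp

lemma computes_output:
  assumes "computes M F"
  obtains n where "\<And>m. n \<le> m \<Longrightarrow> tape_content (snd (otm_run M \<phi> a m) ! 2) = F \<phi> a"
  using assms otm_run_halted_stable unfolding computes_def by metis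

lemma computes_oracle_cong:
  assumes "computes M F" and "\<And>s. otm_run M \<psi> a s = otm_run M \<phi> a s"
  shows "F \<psi> a = F \<phi> a"
proof -
  obtain n1 where n1: "\<And>m. n1 \<le> m \<Longrightarrow> tape_content (snd (otm_run M \<phi> a m) ! 2) = F \<phi> a"
    using computes_output[OF assms(1)] by blast
  obtain n2 where n2: "\<And>m. n2 \<le> m \<Longrightarrow> tape_content (snd (otm_run M \<psi> a m) ! 2) = F \<psi> a"
    using computes_output[OF assms(1)] by blast
  show ?thesis
    using n1[of "max n1 n2"] n2[of "max n1 n2"] assms(2)[of "max n1 n2"] by simp
qed

lemma length_rev_cong:
  assumes "\<And>s. s \<le> n \<Longrightarrow> otm_run M \<psi> a s = otm_run M \<phi> a s" and "m \<le> n"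
  shows "length_rev M \<psi> a m = length_rev M \<phi> a m"
  using assms(2) by (induction m) (simp_all add: assms(1))

lemma length_rev_mono: "m \<le> n \<Longrightarrow> length_rev M \<phi> a m \<le> length_rev M \<phi> a n"
  by (induction n) (auto simp: le_Suc_eq le_max_iff_disj)

lemma length_query_tape_le_length_rev:
  assumes "wf_otm M"
  shows "length (tape_content (snd (otm_run M \<phi> a n) ! 1)) \<le> length_rev M \<phi> a n"
proof (cases n)
  case 0
  have "snd (init_config M a) ! 1 = ([], 0)"
    using assms by (simp add: init_config_def wf_otm_def)
  then show ?thesis using 0 by (simp add: tape_content_def)
qed simp

section \<open>A linear-time machine iterating the oracle\<close>

definition first_bit_of_iterate :: "bfun \<Rightarrow> bstr \<Rightarrow> bstr" where
  "first_bit_of_iterate \<phi> a = take 1 ((\<phi> ^^ length a) [])"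

text \<open>State 0 advances over the input and hands the query tape to the oracle (state 1);
  at the end of the input, state 2 copies the first query-tape cell to the output and halts (state 3).
  Every cell under a head is rewritten with the symbol read.\<close>
definition iterate_delta :: "nat \<Rightarrow> nat list \<Rightarrow> nat \<times> nat list \<times> int list" where
  "iterate_delta q rs = (if q = 2 then (3, [rs!0, rs!1, rs!1], [0,0,0])
              else if rs!0 = 0 then (2, rs, [0,0,0]) else (1, rs, [1,0,0]))"

definition iterate_machine :: otm where
  "iterate_machine = \<lparr>ntapes = 3, nstates = 4, nsyms = 3, delta = iterate_delta, q_start = 0,
     q_halt = 3, q_query = 1, q_answer = 0\<rparr>"

lemma iterate_machine_simps [simp]:
  "ntapes iterate_machine = 3" "nstates iterate_machine = 4" "nsyms iterate_machine = 3"
  "delta iterate_machine = iterate_delta" "q_start iterate_machine = 0" "q_halt iterate_machine = 3"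
  "q_query iterate_machine = 1" "q_answer iterate_machine = 0"
  by (simp_all add: iterate_machine_def)

lemma wf_iterate_machine: "wf_otm iterate_machine"
proof -
  have "set [rs!0, rs!1, rs!1] \<subseteq> {..<3}" if "length rs = 3" "set rs \<subseteq> {..<3::nat}" for rs :: "nat list"
    using that by (auto simp: nth_mem subset_iff)
  then show ?thesis
    by (auto simp: wf_otm_def iterate_delta_def)
qed

text \<open>Rewriting the symbol read may turn an empty tape into a single blank cell.\<close>
definition tape_holds :: "nat list \<Rightarrow> bstr \<Rightarrow> bool" where
  "tape_holds x b \<longleftrightarrow> x = map enc b \<or> (b = [] \<and> x = [0])"

lemma tape_holds_content: "tape_holds x b \<Longrightarrow> tape_content (x, 0) = b"
  by (auto simp: tape_holds_def) (simp add: tape_content_def)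

lemma tape_holds_read: "tape_holds x b \<Longrightarrow> tape_read (x, 0) = (case b of [] \<Rightarrow> 0 | h # _ \<Rightarrow> enc h)"
  by (cases b) (auto simp: tape_holds_def tape_read_def)

lemma tape_holds_rewrite_read:
  assumes "tape_holds x b"
  obtains x' where "tape_write (tape_read (x, 0)) (x, 0) = (x', 0)" "tape_holds x' b" "x' \<noteq> []"
  using assms that by (cases b) (auto simp: tape_holds_def tape_read_def tape_write_def)

lemma tape_move_0 [simp]: "tape_move 0 t = t"
  by (simp add: tape_move_def)

lemma rewrite_read_blank: "y = [] \<or> y = [0] \<Longrightarrow> tape_write (tape_read (y, 0)) (y, 0) = ([0], 0)"
  by (auto simp: tape_read_def tape_write_def)

definition iterate_invariant :: "bfun \<Rightarrow> bstr \<Rightarrow> nat \<Rightarrow> config \<Rightarrow> bool" where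
  "iterate_invariant \<phi> a k c \<longleftrightarrow> (\<exists>x y. c = (0, [(map enc a, k), (x, 0), (y, 0)]) \<and>
     tape_holds x ((\<phi> ^^ k) []) \<and> (y = [] \<or> y = [0]))"

lemma iterate_invariant_Suc:
  assumes "iterate_invariant \<phi> a k c" and "k < length a"
  shows "iterate_invariant \<phi> a (Suc k) (otm_step iterate_machine \<phi> (otm_step iterate_machine \<phi> c))"
proof -
  obtain x y where c: "c = (0, [(map enc a, k), (x, 0), (y, 0)])"
    and x: "tape_holds x ((\<phi> ^^ k) [])" and y: "y = [] \<or> y = [0]"
    using assms(1) unfolding iterate_invariant_def by blast
  obtain x' where x': "tape_write (tape_read (x, 0)) (x, 0) = (x', 0)" "tape_holds x' ((\<phi> ^^ k) [])"
    using tape_holds_rewrite_read[OF x] by blast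
  have "(map enc a)[k := enc (a ! k)] = map enc a"
    using assms(2) by (metis list_update_id nth_map)
  then have input: "tape_read (map enc a, k) = enc (a ! k)" "enc (a ! k) \<noteq> 0"
    "tape_write (enc (a ! k)) (map enc a, k) = (map enc a, k)"
    using assms(2) by (simp_all add: tape_read_def tape_write_def enc_def)
  have "otm_step iterate_machine \<phi> c = (1, [(map enc a, Suc k), (x', 0), ([0], 0)])"
    using c input x'(1) rewrite_read_blank[OF y]
    by (simp add: otm_step_def iterate_delta_def Let_def tape_move_def)
  then have "otm_step iterate_machine \<phi> (otm_step iterate_machine \<phi> c) =
      (0, [(map enc a, Suc k), (map enc (\<phi> ((\<phi> ^^ k) [])), 0), ([0], 0)])"
    using tape_holds_content[OF x'(2)] by (simp add: otm_step_def Let_def)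
  then show ?thesis by (simp add: iterate_invariant_def tape_holds_def)
qed

lemma iterate_invariant_run:
  "k \<le> length a \<Longrightarrow> iterate_invariant \<phi> a k (otm_run iterate_machine \<phi> a (2 * k))"
proof (induction k)
  case 0
  then show ?case by (simp add: init_config_def iterate_invariant_def tape_holds_def numeral_3_eq_3)
next
  case (Suc k)
  then show ?case using iterate_invariant_Suc[of \<phi> a k] by (simp add: otm_run_Suc)
qed

lemma iterate_machine_output:
  "halted iterate_machine (otm_run iterate_machine \<phi> a (2 * length a + 2)) \<and>
   tape_content (snd (otm_run iterate_machine \<phi> a (2 * length a + 2)) ! 2) = first_bit_of_iterate \<phi> a"
proof -
  let ?k = "length a"
  obtain x y where c: "otm_run iterate_machine \<phi> a (2 * ?k) = (0, [(map enc a, ?k), (x, 0), (y, 0)])"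
    and x: "tape_holds x ((\<phi> ^^ ?k) [])" and y: "y = [] \<or> y = [0]"
    using iterate_invariant_run[of ?k a \<phi>] unfolding iterate_invariant_def by blast
  obtain x' where x': "tape_write (tape_read (x, 0)) (x, 0) = (x', 0)" "tape_holds x' ((\<phi> ^^ ?k) [])"
    "x' \<noteq> []"
    using tape_holds_rewrite_read[OF x] by blast
  define t where "t = tape_write 0 (map enc a, ?k)"
  have "otm_run iterate_machine \<phi> a (Suc (2 * ?k)) = (2, [t, (x', 0), ([0], 0)])"
    unfolding otm_run_Suc c using x'(1) rewrite_read_blank[OF y]
    by (simp add: otm_step_def iterate_delta_def Let_def tape_read_def t_def)
  then have "otm_run iterate_machine \<phi> a (2 * ?k + 2) =
      (3, [tape_write (tape_read t) t, (x', 0), ([tape_read (x', 0)], 0)])"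
    using x'(3) by (simp add: otm_run_Suc otm_step_def iterate_delta_def Let_def tape_write_def tape_read_def)
  moreover have "tape_content ([tape_read (x', 0)], 0) = first_bit_of_iterate \<phi> a"
    using tape_holds_read[OF x'(2)]
    by (cases "(\<phi> ^^ ?k) []") (auto simp: tape_content_def first_bit_of_iterate_def enc_def)
  ultimately show ?thesis by (simp add: halted_def)
qed

lemma poly_time_first_bit_of_iterate: "poly_time_computable first_bit_of_iterate"
  unfolding poly_time_computable_def
proof (intro exI conjI allI)
  show "computes iterate_machine first_bit_of_iterate"
    unfolding computes_def using wf_iterate_machine iterate_machine_output by blast
  show "(\<lambda>l n. poly [:2, 2:] n) \<in> second_order_poly" by (rule sop_poly)
  fix \<phi> a
  have "halted iterate_machine (otm_run iterate_machine \<phi> a (2 * length a + 2))"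
    using iterate_machine_output by blast
  then show "otm_time iterate_machine \<phi> a \<le> enat (poly [:2, 2:] (length a))"
    by (auto simp: otm_time_def intro: Least_le order.trans)
qed

section \<open>No machine with finite length-revision iterates the oracle\<close>

fun chain_oracle :: "nat list \<Rightarrow> bfun" where
  "chain_oracle (l1 # l2 # ls) x =
     (if x = replicate l1 True then replicate l2 True else chain_oracle (l2 # ls) x)"
| "chain_oracle _ x = x"

lemma chain_oracle_link:
  assumes "sorted_wrt (<) ls" and "Suc k < length ls"
  shows "chain_oracle ls (replicate (ls ! k) True) = replicate (ls ! Suc k) True"
  using assms
proof (induction ls arbitrary: k rule: induct_list012)
  case (3 l1 l2 ls)
  show ?case
  proof (cases k)
    case (Suc k')
    then have "l1 < (l2 # ls) ! k'"
      using "3.prems" nth_mem[of k' "l2 # ls"] by auto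
    then show ?thesis using "3.IH"(2)[of k'] "3.prems" Suc by simp
  qed simp
qed auto

lemma chain_oracle_fixed:
  assumes "\<And>k. Suc k < length ls \<Longrightarrow> x \<noteq> replicate (ls ! k) True"
  shows "chain_oracle ls x = x"
  using assms
proof (induction ls x rule: chain_oracle.induct)
  case (1 l1 l2 ls x)
  have "chain_oracle (l2 # ls) x = x"
    using "1.prems"[of "Suc _"] by (intro "1.IH") (use "1.prems"[of 0] in auto)
  then show ?case using "1.prems"[of 0] by simp
qed auto

locale bounded_revision_iterator =
  fixes M :: otm and N :: nat
  assumes computes: "computes M first_bit_of_iterate"
    and bounded: "\<And>\<phi> a. finite (range (length_rev M \<phi> a)) \<and> card (range (length_rev M \<phi> a)) \<le> N"
begin

lemma wf: "wf_otm M"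
  using computes by (simp add: computes_def)

definition input :: bstr where
  "input = replicate (Suc N) False"

definition queries_at :: "bfun \<Rightarrow> nat \<Rightarrow> bstr \<Rightarrow> bool" where
  "queries_at \<phi> s x \<longleftrightarrow>
     fst (otm_run M \<phi> input s) = q_query M \<and> tape_content (snd (otm_run M \<phi> input s) ! 1) = x"

definition first_query :: "bfun \<Rightarrow> bstr \<Rightarrow> nat" where
  "first_query \<phi> x = (LEAST s. queries_at \<phi> s x)"

primrec lens :: "nat \<Rightarrow> nat list" where
  "lens 0 = [0]"
| "lens (Suc i) = lens i @ [Suc (max (last (lens i))
     (length_rev M (chain_oracle (lens i)) input
        (first_query (chain_oracle (lens i)) (replicate (last (lens i)) True))))]"

definition chain_len :: "nat \<Rightarrow> nat" where
  "chain_len i = last (lens i)"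

definition link :: "nat \<Rightarrow> bstr" where
  "link i = replicate (chain_len i) True"

definition adversary :: "nat \<Rightarrow> bfun" where
  "adversary i = chain_oracle (lens i)"

definition query_time :: "nat \<Rightarrow> nat" where
  "query_time i = first_query (adversary i) (link i)"

lemma chain_len_0: "chain_len 0 = 0"
  by (simp add: chain_len_def)

lemma link_0: "link 0 = []"
  by (simp add: link_def chain_len_0)

lemma chain_len_Suc:
  "chain_len (Suc i) = Suc (max (chain_len i) (length_rev M (adversary i) input (query_time i)))"
  by (simp add: chain_len_def adversary_def query_time_def link_def)

lemma strict_mono_chain_len: "strict_mono chain_len"
  unfolding strict_mono_Suc_iff by (simp add: chain_len_Suc less_Suc_eq_le)

lemma length_lens [simp]: "length (lens i) = Suc i"
  by (induction i) auto

lemma nth_lens: "k \<le> i \<Longrightarrow> lens i ! k = chain_len k"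
proof (induction i)
  case 0
  then show ?case by (simp add: chain_len_def)
next
  case (Suc i)
  then show ?case
    by (cases "k = Suc i") (simp_all add: nth_append chain_len_def last_conv_nth)
qed

lemma sorted_lens: "sorted_wrt (<) (lens i)"
  by (simp add: sorted_wrt_iff_nth_Suc_transp nth_lens strict_mono_chain_len strict_mono_less)

lemma link_eq_iff [simp]: "link k = link k' \<longleftrightarrow> k = k'"
  using strict_mono_chain_len by (simp add: link_def strict_mono_eq)

lemma length_link: "length (link k) = chain_len k"
  by (simp add: link_def)

lemma adversary_link: "k < i \<Longrightarrow> adversary i (link k) = link (Suc k)"
  using chain_oracle_link[OF sorted_lens, of k i] by (simp add: adversary_def link_def nth_lens)

lemma adversary_fixed: "(\<And>k. k < i \<Longrightarrow> x \<noteq> link k) \<Longrightarrow> adversary i x = x"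
  unfolding adversary_def by (rule chain_oracle_fixed) (simp add: nth_lens link_def)

lemma iterate_adversary: "(adversary i ^^ n) [] = link (min n i)"
proof (induction n)
  case 0
  then show ?case by (simp add: link_0)
next
  case (Suc n)
  show ?case
  proof (cases "n < i")
    case False
    then have "adversary i (link i) = link i" by (intro adversary_fixed) simp
    then show ?thesis using Suc False by simp
  qed (use Suc adversary_link in simp)
qed

definition spoiled_adversary :: "nat \<Rightarrow> bfun" where
  "spoiled_adversary i = (adversary i)(link i := [False])"

lemma False_neq_link: "[False] \<noteq> link k"
  by (cases "chain_len k") (auto simp: link_def)

lemma iterate_spoiled_adversary: "(spoiled_adversary i ^^ (Suc i + m)) [] = [False]"
proof (induction m)
  case 0
  have "(spoiled_adversary i ^^ n) [] = link n" if "n \<le> i" for n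
    using that by (induction n) (simp_all add: spoiled_adversary_def link_0 adversary_link)
  then have "(spoiled_adversary i ^^ Suc i) [] = spoiled_adversary i (link i)"
    by simp
  also have "\<dots> = [False]"
    unfolding spoiled_adversary_def by (rule fun_upd_same)
  finally show ?case by simp
next
  case (Suc m)
  have "spoiled_adversary i [False] = [False]"
    using False_neq_link by (simp add: spoiled_adversary_def adversary_fixed)
  then show ?case using Suc by simp
qed

lemma exists_query_of_link:
  assumes "i \<le> N"
  shows "\<exists>s. queries_at (adversary i) s (link i)"
proof (rule ccontr)
  assume no_query: "\<not> ?thesis"
  have "otm_run M (spoiled_adversary i) input s = otm_run M (adversary i) input s" for s
    by (rule otm_run_oracle_cong[of s]) (use no_query in \<open>auto simp: queries_at_def spoiled_adversary_def\<close>)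
  then have "first_bit_of_iterate (spoiled_adversary i) input = first_bit_of_iterate (adversary i) input"
    by (rule computes_oracle_cong[OF computes])
  moreover have "first_bit_of_iterate (adversary i) input = take 1 (link i)"
    unfolding first_bit_of_iterate_def iterate_adversary using assms by (simp add: input_def)
  moreover have "length input = Suc i + (N - i)"
    using assms by (simp add: input_def)
  then have "first_bit_of_iterate (spoiled_adversary i) input = [False]"
    unfolding first_bit_of_iterate_def by (simp only: iterate_spoiled_adversary) simp
  moreover have "take 1 (link i) \<noteq> [False]"
    by (cases "chain_len i") (auto simp: link_def)
  ultimately show False by simp
qed

lemma queries_at_query_time: "i \<le> N \<Longrightarrow> queries_at (adversary i) (query_time i) (link i)"
  unfolding query_time_def first_query_def by (rule LeastI_ex) (rule exists_query_of_link)

lemma not_queries_before_query_time: "s < query_time i \<Longrightarrow> \<not> queries_at (adversary i) s (link i)"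
  unfolding query_time_def first_query_def by (rule not_less_Least)

lemma length_rev_query_time_less: "length_rev M (adversary i) input (query_time i) < chain_len (Suc i)"
  by (simp add: chain_len_Suc)

text \<open>Queries before query_time i are shorter than link (i+1) and differ from link i, so all later
  adversaries answer them alike.\<close>
lemma otm_run_later_adversary:
  assumes "i \<le> j" and "s \<le> query_time i"
  shows "otm_run M (adversary j) input s = otm_run M (adversary i) input s"
proof (rule otm_run_oracle_cong[OF _ assms(2)])
  fix s
  assume s: "s < query_time i" and q: "fst (otm_run M (adversary i) input s) = q_query M"
  define x where "x = tape_content (snd (otm_run M (adversary i) input s) ! 1)"
  have "length x \<le> length_rev M (adversary i) input s"
    unfolding x_def by (rule length_query_tape_le_length_rev[OF wf])
  also have "\<dots> \<le> length_rev M (adversary i) input (query_time i)"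
    using s by (simp add: length_rev_mono)
  also have "\<dots> < chain_len (Suc i)"
    by (rule length_rev_query_time_less)
  finally have "length x < chain_len (Suc i)" .
  moreover have "chain_len (Suc i) \<le> chain_len k" if "Suc i \<le> k" for k
    using that strict_mono_chain_len by (simp add: strict_mono_less_eq)
  ultimately have "x \<noteq> link k" if "Suc i \<le> k" for k
    using that length_link[of k] by fastforce
  moreover have "x \<noteq> link i"
    using not_queries_before_query_time[OF s] q by (simp add: queries_at_def x_def)
  ultimately have not_later: "x \<noteq> link k" if "i \<le> k" for k
    using that by (cases "k = i") auto
  show "adversary i x = adversary j x"
  proof (cases "\<exists>k<i. x = link k")
    case True
    then show ?thesis using adversary_link assms(1) by fastforce
  next
    case False
    have "x \<noteq> link k" if "k < j" for k
    proof (cases "k < i")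
      case True
      then show ?thesis using False by blast
    qed (use not_later in simp)
    then show ?thesis using False by (simp add: adversary_fixed)
  qed
qed

lemma length_rev_later_adversary:
  "i \<le> j \<Longrightarrow> s \<le> query_time i \<Longrightarrow> length_rev M (adversary j) input s = length_rev M (adversary i) input s"
  by (rule length_rev_cong[of "query_time i"]) (auto intro: otm_run_later_adversary)

lemma chain_len_le_length_rev_after_query:
  assumes "i < j" and "i \<le> N"
  shows "chain_len (Suc i) \<le> length_rev M (adversary j) input (Suc (query_time i))"
proof -
  have "queries_at (adversary j) (query_time i) (link i)"
    using queries_at_query_time[OF assms(2)] otm_run_later_adversary[of i j "query_time i"] assms(1)
    by (simp add: queries_at_def)
  then have "tape_content (snd (otm_run M (adversary j) input (Suc (query_time i))) ! 1) = link (Suc i)"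
    using query_tape_after_query[OF wf] adversary_link[OF assms(1)] by (simp add: queries_at_def)
  then show ?thesis
    by (metis length_rev.simps(2) length_link max.cobounded2)
qed

lemma query_time_less:
  assumes "Suc i \<le> N"
  shows "query_time i < query_time (Suc i)"
proof (rule ccontr)
  assume "\<not> ?thesis"
  then have le: "query_time (Suc i) \<le> query_time i" by simp
  have "tape_content (snd (otm_run M (adversary i) input (query_time (Suc i))) ! 1) = link (Suc i)"
    using queries_at_query_time[OF assms] otm_run_later_adversary[of i "Suc i" "query_time (Suc i)"] le
    by (simp add: queries_at_def)
  then have "chain_len (Suc i) \<le> length_rev M (adversary i) input (query_time (Suc i))"
    using length_query_tape_le_length_rev[OF wf, of "adversary i" input "query_time (Suc i)"]
    by (simp add: length_link)
  also have "\<dots> \<le> length_rev M (adversary i) input (query_time i)"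
    using le by (simp add: length_rev_mono)
  also have "\<dots> < chain_len (Suc i)"
    by (rule length_rev_query_time_less)
  finally show False by simp
qed

lemma inconsistent: False
proof -
  define revision where "revision k = length_rev M (adversary (Suc N)) input (Suc (query_time k))" for k
  have "revision k < revision (Suc k)" if "k < N" for k
  proof -
    have "revision k \<le> length_rev M (adversary (Suc N)) input (query_time (Suc k))"
      unfolding revision_def using query_time_less[of k] that by (intro length_rev_mono) simp
    also have "\<dots> = length_rev M (adversary (Suc k)) input (query_time (Suc k))"
      using that by (intro length_rev_later_adversary) simp_all
    also have "\<dots> < chain_len (Suc (Suc k))"
      by (rule length_rev_query_time_less)
    also have "\<dots> \<le> revision (Suc k)"
      unfolding revision_def using that by (intro chain_len_le_length_rev_after_query) simp_all
    finally show ?thesis .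
  qed
  then have "sorted_wrt (<) (map revision [0..<Suc N])"
    by (auto simp: sorted_wrt_iff_nth_Suc_transp simp del: upt_Suc)
  then have "distinct (map revision [0..<Suc N])"
    by (simp only: strict_sorted_iff)
  then have "card (set (map revision [0..<Suc N])) = Suc N"
    using distinct_card by fastforce
  moreover have "set (map revision [0..<Suc N]) \<subseteq> range (length_rev M (adversary (Suc N)) input)"
    by (auto simp: revision_def simp del: length_rev.simps)
  ultimately show False
    using bounded[of "adversary (Suc N)" input] by (metis card_mono not_less_eq_eq)
qed

end

lemma no_finite_length_revision_machine:
  "\<not> (\<exists>M. computes M first_bit_of_iterate \<and> finite_length_revision M)"
proof
  assume "\<exists>M. computes M first_bit_of_iterate \<and> finite_length_revision M"
  then obtain M N where "bounded_revision_iterator M N"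
    unfolding finite_length_revision_def bounded_revision_iterator_def by blast
  then show False by (rule bounded_revision_iterator.inconsistent)
qed

section \<open>Finite length-revision and a polynomial step-count bound the running time\<close>

lemma finite_strings_le: "finite {a :: bstr. length a \<le> n}"
  using finite_lists_length_le[of "UNIV :: bool set" n] by simp

lemma length_le_size_fn: "length (\<phi> b) \<le> size_fn \<phi> (length b)"
  unfolding size_fn_def by (rule Max_ge) (use finite_strings_le in auto)

lemma mono_size_fn: "mono (size_fn \<phi>)"
proof (rule monoI)
  fix m n :: nat
  assume "m \<le> n"
  then show "size_fn \<phi> m \<le> size_fn \<phi> n"
    unfolding size_fn_def using finite_strings_le by (intro Max_mono) (auto intro!: exI[of _ "[]"])
qed

lemma mono_poly_nat: "mono (poly (p :: nat poly))"
proof (induction p rule: pCons_induct)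
  case (pCons c p)
  then show ?case by (auto intro!: monoI add_left_mono mult_mono dest: monoD)
qed (simp add: monoI)

lemma tape_move_write_bounds:
  assumes "d \<in> {-1, 0, 1}"
  shows "length (fst (tape_move d (tape_write w t))) \<le> max (length (fst t)) (Suc (snd t))"
    and "snd (tape_move d (tape_write w t)) \<le> Suc (snd t)"
  using assms by (auto simp: tape_move_def tape_write_def)

lemma otm_step_normal_tape_bounds:
  assumes wf: "wf_otm M" and c: "wf_config M c"
    and "fst c \<noteq> q_halt M" and "fst c \<noteq> q_query M" and i: "i < ntapes M"
  shows "length (fst (snd (otm_step M \<phi> c) ! i)) \<le> max (length (fst (snd c ! i))) (Suc (snd (snd c ! i)))"
    and "snd (snd (otm_step M \<phi> c) ! i) \<le> Suc (snd (snd c ! i))"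
proof -
  obtain q' ws ds where h: "length ws = ntapes M" "length ds = ntapes M" "set ds \<subseteq> {-1, 0, 1}"
    and step: "otm_step M \<phi> c = (q', map (\<lambda>((t, w), d). tape_move d (tape_write w t)) (zip (zip (snd c) ws) ds))"
    using otm_step_normal[OF assms(1-4)] by metis
  have "snd (otm_step M \<phi> c) ! i = tape_move (ds ! i) (tape_write (ws ! i) (snd c ! i))"
    using step h c i by (simp add: wf_config_def)
  moreover have "ds ! i \<in> {-1, 0, 1}"
    using h(2,3) i by (metis nth_mem subsetD)
  ultimately show "length (fst (snd (otm_step M \<phi> c) ! i)) \<le> max (length (fst (snd c ! i))) (Suc (snd (snd c ! i)))"
    and "snd (snd (otm_step M \<phi> c) ! i) \<le> Suc (snd (snd c ! i))"
    using tape_move_write_bounds by simp_all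
qed

text \<open>If the length revision before step n + 1 is v, the step count gives n \<le> p v, so the query
  tape holds at most v + n + 1 cells and an oracle answer has length at most l v.\<close>
definition revision_bound :: "nat poly \<Rightarrow> (nat \<Rightarrow> nat) \<Rightarrow> nat \<Rightarrow> nat" where
  "revision_bound p l v = v + poly p v + 1 + l v"

lemma mono_revision_bound: "mono l \<Longrightarrow> mono (revision_bound p l)"
  unfolding revision_bound_def using mono_poly_nat[of p]
  by (intro monoI add_mono) (auto dest: monoD)

lemma second_order_poly_poly_comp:
  "Q \<in> second_order_poly \<Longrightarrow> (\<lambda>l n. poly p (Q l n)) \<in> second_order_poly"
proof (induction p rule: pCons_induct)
  case 0
  have "(\<lambda>l n. poly (0 :: nat poly) n) \<in> second_order_poly" by (rule sop_poly)
  then show ?case by simp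
next
  case (pCons c p)
  have "(\<lambda>l n. poly [:c:] n + Q l n * poly p (Q l n)) \<in> second_order_poly"
    by (intro sop_add sop_mult sop_poly pCons)
  then show ?case by simp
qed

lemma second_order_poly_iterate_revision_bound:
  "(\<lambda>l n. (revision_bound p l ^^ k) n) \<in> second_order_poly"
proof (induction k)
  case 0
  have "(\<lambda>l n. poly [:0, 1:] n) \<in> second_order_poly" by (rule sop_poly)
  then show ?case by simp
next
  case (Suc k)
  let ?Q = "\<lambda>l n. (revision_bound p l ^^ k) n"
  have "(revision_bound p l ^^ Suc k) n = ?Q l n + poly p (?Q l n) + poly 1 n + l (?Q l n)" for l n
    using revision_bound_def[of p l "?Q l n"] by simp
  then show ?case
    by (simp only:) (intro sop_add second_order_poly_poly_comp sop_poly sop_app Suc)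
qed

locale step_counted_run =
  fixes M :: otm and p :: "nat poly" and \<phi> :: bfun and a :: bstr
  assumes wf: "wf_otm M"
    and step_count: "is_step_count M (poly p)"
begin

abbreviation "lr \<equiv> length_rev M \<phi> a"

abbreviation "query_tape n \<equiv> snd (otm_run M \<phi> a n) ! 1"

lemma query_tape_bounds: "length (fst (query_tape n)) \<le> lr n + n \<and> snd (query_tape n) \<le> n"
proof (induction n)
  case 0
  then show ?case using wf by (simp add: init_config_def wf_otm_def)
next
  case (Suc n)
  have lr_le: "lr n \<le> lr (Suc n)" by simp
  consider "fst (otm_run M \<phi> a n) = q_halt M" | "fst (otm_run M \<phi> a n) = q_query M"
    | "fst (otm_run M \<phi> a n) \<noteq> q_halt M" "fst (otm_run M \<phi> a n) \<noteq> q_query M"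
    by blast
  then show ?case
  proof cases
    case 1
    then have "query_tape (Suc n) = query_tape n"
      by (simp add: otm_run_Suc otm_step_halted halted_def)
    then show ?thesis using Suc.IH lr_le by (simp del: length_rev.simps)
  next
    case 2
    then obtain b where b: "query_tape (Suc n) = (map enc b, 0)"
      using query_tape_after_query[OF wf] by blast
    have "length (tape_content (query_tape (Suc n))) \<le> lr (Suc n)" by simp
    then show ?thesis unfolding b by simp
  next
    case 3
    have "1 < ntapes M" using wf by (simp add: wf_otm_def)
    then show ?thesis
      using otm_step_normal_tape_bounds[OF wf wf_config_otm_run[OF wf] 3, of 1 \<phi>] Suc.IH lr_le
      by (auto simp: otm_run_Suc)
  qed
qed

lemma length_rev_Suc_le: "lr (Suc n) \<le> lr n + Suc n + size_fn \<phi> (lr n)"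
proof -
  have "length (tape_content (query_tape (Suc n))) \<le> lr n + Suc n + size_fn \<phi> (lr n)"
  proof (cases "fst (otm_run M \<phi> a n) = q_query M")
    case True
    define x where "x = tape_content (query_tape n)"
    have "length (\<phi> x) \<le> size_fn \<phi> (length x)"
      by (rule length_le_size_fn)
    also have "\<dots> \<le> size_fn \<phi> (lr n)"
      unfolding x_def by (rule monoD[OF mono_size_fn length_query_tape_le_length_rev[OF wf]])
    finally show ?thesis
      using query_tape_after_query[OF wf True] by (simp add: x_def)
  next
    case False
    have "length (fst (query_tape (Suc n))) \<le> lr n + Suc n"
    proof (cases "fst (otm_run M \<phi> a n) = q_halt M")
      case True
      then show ?thesis using query_tape_bounds[of n]
        by (simp add: otm_run_Suc otm_step_halted halted_def)
    next
      case nh: False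
      have "1 < ntapes M" using wf by (simp add: wf_otm_def)
      then show ?thesis
        using otm_step_normal_tape_bounds[OF wf wf_config_otm_run[OF wf] nh False, of 1 \<phi>]
          query_tape_bounds[of n]
        by (auto simp: otm_run_Suc)
    qed
    then show ?thesis using tape_content_length_le[of "query_tape (Suc n)"] by simp
  qed
  then show ?thesis by simp
qed

lemma length_rev_le_iterate:
  "enat n \<le> otm_time M \<phi> a \<Longrightarrow> lr n \<le> (revision_bound p (size_fn \<phi>) ^^ card (lr ` {..n})) (length a)"
proof (induction n)
  case 0
  then show ?case by (simp add: revision_bound_def)
next
  case (Suc n)
  let ?B = "revision_bound p (size_fn \<phi>)"
  have mono_B: "mono ?B"
    using mono_revision_bound mono_size_fn by blast
  have en: "enat n \<le> otm_time M \<phi> a"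
    using Suc.prems by (rule order_trans[rotated]) simp
  have IH: "lr n \<le> (?B ^^ card (lr ` {..n})) (length a)"
    using Suc.IH en by simp
  show ?case
  proof (cases "lr (Suc n) = lr n")
    case True
    then have "lr ` {..Suc n} = lr ` {..n}"
      by (auto simp: atMost_Suc simp del: length_rev.simps)
    then show ?thesis using IH True by simp
  next
    case False
    then have "lr m < lr (Suc n)" if "m \<le> n" for m
      using length_rev_mono[OF that, of M \<phi> a] length_rev_mono[of n "Suc n" M \<phi> a] by simp
    then have "lr (Suc n) \<notin> lr ` {..n}" by fastforce
    then have card: "card (lr ` {..Suc n}) = Suc (card (lr ` {..n}))"
      by (simp add: atMost_Suc)
    have "n \<le> poly p (lr n)"
      using step_count en by (simp add: is_step_count_def)
    then have "lr (Suc n) \<le> ?B (lr n)"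
      using length_rev_Suc_le[of n] by (simp add: revision_bound_def)
    also have "\<dots> \<le> ?B ((?B ^^ card (lr ` {..n})) (length a))"
      by (rule monoD[OF mono_B IH])
    finally show ?thesis using card by simp
  qed
qed

end

lemma otm_time_finite:
  assumes "computes M F"
  obtains T where "otm_time M \<phi> a = enat T"
proof -
  have "\<exists>n. halted M (otm_run M \<phi> a n)"
    using assms by (auto simp: computes_def)
  then show thesis using that by (simp add: otm_time_def)
qed

lemma strongly_poly_time_imp_poly_time:
  assumes "strongly_poly_time_computable G"
  shows "poly_time_computable G"
proof -
  obtain M p N where computes: "computes M G" and step_count: "is_step_count M (poly p)"
    and bounded: "\<And>\<phi> a. finite (range (length_rev M \<phi> a)) \<and> card (range (length_rev M \<phi> a)) \<le> N"
    using assms unfolding strongly_poly_time_computable_def finite_length_revision_def by blast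
  define P where "P l n = poly p ((revision_bound p l ^^ N) n)" for l n
  have "P \<in> second_order_poly"
    unfolding P_def by (intro second_order_poly_poly_comp second_order_poly_iterate_revision_bound)
  moreover have "otm_time M \<phi> a \<le> enat (P (size_fn \<phi>) (length a))" for \<phi> a
  proof -
    interpret step_counted_run M p \<phi> a
      using computes step_count by unfold_locales (simp add: computes_def)
    let ?B = "revision_bound p (size_fn \<phi>)"
    obtain T where time: "otm_time M \<phi> a = enat T"
      using otm_time_finite[OF computes] by blast
    have "card (lr ` {..T}) \<le> card (range lr)"
      using bounded[of \<phi> a] by (intro card_mono) auto
    then have "card (lr ` {..T}) \<le> N"
      using bounded[of \<phi> a] by linarith
    then have "(?B ^^ card (lr ` {..T})) (length a) \<le> (?B ^^ N) (length a)"
      by (intro funpow_mono2 mono_revision_bound mono_size_fn) (simp_all add: revision_bound_def)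
    moreover have "lr T \<le> (?B ^^ card (lr ` {..T})) (length a)"
      using time by (intro length_rev_le_iterate) simp
    moreover have "T \<le> poly p (lr T)"
      using step_count time by (simp add: is_step_count_def)
    ultimately show ?thesis
      using mono_poly_nat[of p] by (simp add: time P_def) (meson monoD order_trans)
  qed
  ultimately show ?thesis
    using computes unfolding poly_time_computable_def by blast
qed

theorem mainTheorem11:
  shows "\<exists>F :: bfun \<Rightarrow> bstr \<Rightarrow> bstr.
           poly_time_computable F \<and>
           \<not> (\<exists>M. computes M F \<and> finite_length_revision M) \<and>
           \<not> strongly_poly_time_computable F \<and>
           {G. strongly_poly_time_computable G} \<subset> {G. poly_time_computable G}"
proof (intro exI conjI)
  show "poly_time_computable first_bit_of_iterate"
    by (rule poly_time_first_bit_of_iterate)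
  show "\<not> (\<exists>M. computes M first_bit_of_iterate \<and> finite_length_revision M)"
    by (rule no_finite_length_revision_machine)
  then show not_strong: "\<not> strongly_poly_time_computable first_bit_of_iterate"
    unfolding strongly_poly_time_computable_def by blast
  show "{G. strongly_poly_time_computable G} \<subset> {G. poly_time_computable G}"
    using strongly_poly_time_imp_poly_time not_strong poly_time_first_bit_of_iterate by blast
qed

end
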